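(* Let $\Sigma$ be a finite set of tokens, $c$ a context, $M_1,M_2$ language models, and $f$ a min-bounded function. Then $$\overline{f_c}(M_1,M_2)\le\sqrt{MAE_c(M_1,M_2)}.$$
   Context: Let $n=|\Sigma|$. A context is a finite sequence of tokens from $\Sigma$. A language model $M$ assigns to every context $c$ and token $t\in\Sigma$ a probability $p_M(t\mid c)>0$, with $\sum_{t\in\Sigma}p_M(t\mid c)=1$. For $g:\Sigma\to\mathbb{R}_{>0}$, $GM(g(t)):=\exp\big(\tfrac1n\sum_{t\in\Sigma}\log g(t)\big)$. Typical probability: $tp_c(M):=GM(p_M(t\mid c))$; relative probability: $rp_M(t\mid c):=p_M(t\mid c)/tp_c(M)$. A function $f:\mathbb{R}_{>0}^2\to\mathbb{R}_{>0}$ is proper-avg if $\min(x,y)\le f(x,y)\le\max(x,y)$ for all $x,y>0$; it is min-bounded if it is proper-avg and there is a constant $\lambda_f$ with $f(x,y)\le\lambda_f\min(x,y)$ for all $x,y>0$. For such $f$, set $M(t\mid c):=f(rp_{M_1}(t\mid c),rp_{M_2}(t\mid c))$ and define $\overline{f_c}(M_1,M_2):=GM\big(M(t\mid c)^{-1}\big)$. The mean absolute exposure is $MAE_c(M_1,M_2):=GM\Big(\max\Big(\tfrac{rp_{M_1}(t\mid c)}{rp_{M_2}(t\mid c)},\tfrac{rp_{M_2}(t\mid c)}{rp_{M_1}(t\mid c)}\Big)\Big)$. *)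

theory Defs
  imports Complex_Main
begin

text \<open>The token set Sigma is the (finite) universe of the type 'a; n = CARD('a).
  A context is a list of tokens; a language model maps a context and a token to a probability.\<close>

definition GM :: "('a::finite \<Rightarrow> real) \<Rightarrow> real" where
  "GM g = exp ((\<Sum>t\<in>UNIV. ln (g t)) / real (card (UNIV :: 'a set)))"

definition is_LM :: "('a::finite list \<Rightarrow> 'a \<Rightarrow> real) \<Rightarrow> bool" where
  "is_LM M \<longleftrightarrow> (\<forall>c t. M c t > 0) \<and> (\<forall>c. (\<Sum>t\<in>UNIV. M c t) = 1)"

definition tp :: "'a::finite list \<Rightarrow> ('a list \<Rightarrow> 'a \<Rightarrow> real) \<Rightarrow> real" where
  "tp c M = GM (\<lambda>t. M c t)"

definition rp :: "('a::finite list \<Rightarrow> 'a \<Rightarrow> real) \<Rightarrow> 'a \<Rightarrow> 'a list \<Rightarrow> real" where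
  "rp M t c = M c t / tp c M"

definition proper_avg :: "(real \<Rightarrow> real \<Rightarrow> real) \<Rightarrow> bool" where
  "proper_avg f \<longleftrightarrow> (\<forall>x y. x > 0 \<longrightarrow> y > 0 \<longrightarrow> min x y \<le> f x y \<and> f x y \<le> max x y)"

definition min_bounded :: "(real \<Rightarrow> real \<Rightarrow> real) \<Rightarrow> bool" where
  "min_bounded f \<longleftrightarrow> proper_avg f \<and>
     (\<exists>lam. \<forall>x y. x > 0 \<longrightarrow> y > 0 \<longrightarrow> f x y \<le> lam * min x y)"

definition fbar :: "(real \<Rightarrow> real \<Rightarrow> real) \<Rightarrow> 'a::finite list \<Rightarrow>
    ('a list \<Rightarrow> 'a \<Rightarrow> real) \<Rightarrow> ('a list \<Rightarrow> 'a \<Rightarrow> real) \<Rightarrow> real" where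
  "fbar f c M1 M2 = GM (\<lambda>t. inverse (f (rp M1 t c) (rp M2 t c)))"

definition MAE :: "'a::finite list \<Rightarrow> ('a list \<Rightarrow> 'a \<Rightarrow> real) \<Rightarrow> ('a list \<Rightarrow> 'a \<Rightarrow> real) \<Rightarrow> real" where
  "MAE c M1 M2 = GM (\<lambda>t. max (rp M1 t c / rp M2 t c) (rp M2 t c / rp M1 t c))"

end

theory Submission
  imports Defs
begin

text \<open>Relative probabilities have geometric mean 1, and
  \<open>max (a/b) (b/a) = a b / min a b\<^sup>2\<close>; since the geometric mean is multiplicative,
  \<open>MAE\<close> is therefore the square of the geometric mean of \<open>1 / min a b\<close>.
  As \<open>f\<close> is at least the minimum of its arguments, monotonicity of the geometric
  mean bounds \<open>fbar\<close> by that same quantity.\<close>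

lemma card_UNIV_finite_pos: "real (card (UNIV :: 'a::finite set)) > 0"
  by (simp add: card_gt_0_iff)

lemma GM_pos: "GM g > 0"
  unfolding GM_def by simp

lemma GM_const:
  assumes "k > 0"
  shows "GM (\<lambda>_::'a::finite. k) = k"
  using assms card_UNIV_finite_pos[where 'a='a] unfolding GM_def by simp

lemma GM_mono:
  assumes "\<And>t. 0 < g t" and "\<And>t. g t \<le> h t"
  shows "GM g \<le> GM h"
proof -
  have "(\<Sum>t\<in>UNIV. ln (g t)) \<le> (\<Sum>t\<in>UNIV. ln (h t))"
    using assms by (intro sum_mono) (meson ln_le_cancel_iff order_less_le_trans)
  then show ?thesis
    unfolding GM_def using card_UNIV_finite_pos[where 'a='a]
    by (simp add: divide_right_mono)
qed

lemma GM_mult: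
  assumes "\<And>t. g t \<noteq> 0" and "\<And>t. h t \<noteq> 0"
  shows "GM (\<lambda>t. g t * h t) = GM g * GM h"
proof -
  have "(\<Sum>t\<in>UNIV. ln (g t * h t)) = (\<Sum>t\<in>UNIV. ln (g t)) + (\<Sum>t\<in>UNIV. ln (h t))"
    using assms by (simp add: ln_mult sum.distrib)
  then show ?thesis
    unfolding GM_def by (simp add: add_divide_distrib exp_add)
qed

lemma GM_inverse: "GM (\<lambda>t. inverse (g t)) = inverse (GM g)"
  unfolding GM_def by (simp add: ln_inverse sum_negf exp_minus)

lemma GM_divide:
  assumes "\<And>t. g t \<noteq> 0" and "\<And>t. h t \<noteq> 0"
  shows "GM (\<lambda>t. g t / h t) = GM g / GM h"
  using assms by (simp add: divide_inverse GM_mult GM_inverse)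

lemma GM_power: "GM (\<lambda>t. g t ^ k) = GM g ^ k"
proof -
  have "(\<Sum>t\<in>UNIV. ln (g t ^ k)) / card (UNIV :: 'a set)
      = real k * ((\<Sum>t\<in>UNIV. ln (g t)) / card (UNIV :: 'a set))"
    by (simp add: ln_realpow sum_distrib_left)
  then show ?thesis
    unfolding GM_def by (simp only: exp_of_nat_mult)
qed

lemma rp_pos:
  assumes "is_LM M"
  shows "rp M t c > 0"
  using assms GM_pos unfolding is_LM_def rp_def tp_def by (blast intro: divide_pos_pos)

lemma GM_divide_GM:
  fixes g :: "'a::finite \<Rightarrow> real"
  assumes "\<And>t. g t \<noteq> 0"
  shows "GM (\<lambda>t. g t / GM g) = 1"
proof -
  have "GM (\<lambda>t. g t / GM g) = GM g / GM (\<lambda>_::'a. GM g)"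
    using assms GM_pos[of g] by (intro GM_divide) simp_all
  then show ?thesis
    using GM_pos[of g] by (simp add: GM_const)
qed

lemma GM_rp:
  assumes "is_LM M"
  shows "GM (\<lambda>t. rp M t c) = 1"
  using assms unfolding is_LM_def rp_def tp_def
  by (intro GM_divide_GM) (metis less_irrefl)

lemma max_divide_divide_eq:
  fixes a b :: real
  assumes "0 < a" and "0 < b"
  shows "max (a / b) (b / a) = a * b * inverse (min a b) ^ 2"
proof (cases "a \<le> b")
  case True
  then have "a / b \<le> b / a" using assms by (simp add: divide_simps mult_mono)
  then show ?thesis using True assms by (simp add: field_simps power2_eq_square)
next
  case False
  then have "b / a \<le> a / b" using assms by (simp add: divide_simps mult_mono)
  then show ?thesis using False assms by (simp add: field_simps power2_eq_square)
qed

lemma MAE_eq_GM_inverse_min_square: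
  assumes "is_LM M1" and "is_LM M2"
  shows "MAE c M1 M2 = GM (\<lambda>t. inverse (min (rp M1 t c) (rp M2 t c))) ^ 2"
proof -
  define a b where "a t = rp M1 t c" and "b t = rp M2 t c" for t
  have a_pos: "\<And>t. 0 < a t" and b_pos: "\<And>t. 0 < b t"
    unfolding a_def b_def using assms by (simp_all add: rp_pos)
  have "MAE c M1 M2 = GM (\<lambda>t. a t * b t * inverse (min (a t) (b t)) ^ 2)"
    unfolding MAE_def a_def[symmetric] b_def[symmetric]
    using a_pos b_pos by (simp add: max_divide_divide_eq)
  also have "\<dots> = GM a * GM b * GM (\<lambda>t. inverse (min (a t) (b t))) ^ 2"
    using a_pos b_pos by (simp add: dual_order.strict_implies_not_eq GM_mult GM_power)
  also have "\<dots> = GM (\<lambda>t. inverse (min (a t) (b t))) ^ 2"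
    using assms unfolding a_def b_def by (simp add: GM_rp)
  finally show ?thesis
    unfolding a_def b_def .
qed

theorem lemma3:
  fixes c :: "'a::finite list"
    and M1 M2 :: "'a list \<Rightarrow> 'a \<Rightarrow> real"
    and f :: "real \<Rightarrow> real \<Rightarrow> real"
  assumes "is_LM M1" and "is_LM M2" and "min_bounded f"
  shows "fbar f c M1 M2 \<le> sqrt (MAE c M1 M2)"
proof -
  define a b where "a t = rp M1 t c" and "b t = rp M2 t c" for t
  have min_pos: "\<And>t. 0 < min (a t) (b t)"
    unfolding a_def b_def using assms(1,2) by (simp add: rp_pos)
  have min_le_f: "\<And>t. min (a t) (b t) \<le> f (a t) (b t)"
    using assms(3) min_pos unfolding min_bounded_def proper_avg_def by simp
  have "fbar f c M1 M2 = GM (\<lambda>t. inverse (f (a t) (b t)))"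
    unfolding fbar_def a_def b_def ..
  also have "\<dots> \<le> GM (\<lambda>t. inverse (min (a t) (b t)))"
    using min_le_f min_pos
    by (intro GM_mono)
      (metis inverse_positive_iff_positive order_less_le_trans, simp add: le_imp_inverse_le)
  also have "\<dots> = sqrt (MAE c M1 M2)"
    unfolding a_def b_def MAE_eq_GM_inverse_min_square[OF assms(1,2)]
    by (simp add: abs_of_pos[OF GM_pos])
  finally show ?thesis .
qed

end
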